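(* Let $\operatorname{R}_3=\{a_0,a_1,a_2\}$ be the dihedral quandle of order $3$, with $a_ia_j=a_{2j-i \pmod 3}$. Then the set of non-zero idempotents of $\mathbb{Z}[\operatorname{R}_3]$ is $I(\mathbb{Z}[\operatorname{R}_3])=\{a_0,a_1,a_2\}$.
   Context: For a quandle $Q$, the quandle ring $\mathbb{Z}[Q]$ is the free abelian group with basis $Q$, with multiplication $\big(\sum_i\alpha_i q_i\big)\big(\sum_j\beta_j q_j\big)=\sum_{i,j}\alpha_i\beta_j (q_iq_j)$. $I(\mathbb{Z}[Q])$ denotes the set of non-zero elements $w$ with $w^2=w$. *)

theory Defs
  imports Main
begin

datatype R3 = A0 | A1 | A2

definition r3_idx :: "R3 \<Rightarrow> int" where
  "r3_idx x = (case x of A0 \<Rightarrow> 0 | A1 \<Rightarrow> 1 | A2 \<Rightarrow> 2)"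

definition r3_of :: "int \<Rightarrow> R3" where
  "r3_of k = (if k mod 3 = 0 then A0 else if k mod 3 = 1 then A1 else A2)"

definition r3_op :: "R3 \<Rightarrow> R3 \<Rightarrow> R3" where
  "r3_op x y = r3_of (2 * r3_idx y - r3_idx x)"

(* The quandle ring Z[R_3]: since R_3 is finite, the free abelian group with basis R_3
   is the group of all functions R_3 \<Rightarrow> int (coefficient vectors). *)
type_synonym zr3 = "R3 \<Rightarrow> int"

definition basis :: "R3 \<Rightarrow> zr3" where
  "basis q = (\<lambda>x. if x = q then 1 else 0)"

(* (sum_i alpha_i q_i)(sum_j beta_j q_j) = sum_{i,j} alpha_i beta_j (q_i q_j) *)
definition qmult :: "zr3 \<Rightarrow> zr3 \<Rightarrow> zr3" where
  "qmult u v = (\<lambda>k. \<Sum>p\<in>{(x, y). r3_op x y = k}. u (fst p) * v (snd p))"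

definition nonzero_idempotents :: "zr3 set" where
  "nonzero_idempotents = {w. w \<noteq> (\<lambda>_. 0) \<and> qmult w w = w}"

end

theory Submission
  imports Defs
begin

(* The augmentation w \<mapsto> \<Sum>q. w q is multiplicative, so the coefficients x, y, z of an
   idempotent sum to s = 0 or s = 1. Subtracting two coordinates of w * w = w gives
   (x - y) (x + y - 2 z - 1) = 0, whose second factor is s - 1 - 3 z. For s = 0 it is never
   zero, so x = y = z = 0; for s = 1 it is -3 z, and the three resulting dichotomies
   force two of the coefficients to vanish. *)

lemma UNIV_R3: "(UNIV :: R3 set) = {A0, A1, A2}"
  by (metis R3.exhaust UNIV_eq_I insertCI)

instance R3 :: finite
  by standard (simp add: UNIV_R3)

lemma zr3_eq_iff: "(f :: zr3) = g \<longleftrightarrow> f A0 = g A0 \<and> f A1 = g A1 \<and> f A2 = g A2"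
proof
  assume "f A0 = g A0 \<and> f A1 = g A1 \<and> f A2 = g A2"
  then show "f = g"
    by (intro ext, case_tac x) auto
qed simp

lemma r3_op_simps [simp]:
  "r3_op A0 A0 = A0" "r3_op A1 A1 = A1" "r3_op A2 A2 = A2"
  "r3_op A0 A1 = A2" "r3_op A1 A0 = A2" "r3_op A0 A2 = A1"
  "r3_op A2 A0 = A1" "r3_op A1 A2 = A0" "r3_op A2 A1 = A0"
  by (simp_all add: r3_op_def r3_of_def r3_idx_def)

lemma r3_op_idem: "r3_op q q = q"
  by (cases q) simp_all

lemma qmult_basis: "qmult (basis p) (basis q) = basis (r3_op p q)"
proof
  fix k
  have "qmult (basis p) (basis q) k =
      (\<Sum>r\<in>{(x, y). r3_op x y = k}. if r = (p, q) then 1 else 0)"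
    unfolding qmult_def basis_def by (intro sum.cong) auto
  also have "\<dots> = basis (r3_op p q) k"
    by (simp add: basis_def)
  finally show "qmult (basis p) (basis q) k = basis (r3_op p q) k" .
qed

lemma basis_idempotent: "qmult (basis q) (basis q) = basis q"
  by (simp add: qmult_basis r3_op_idem)

definition augmentation :: "zr3 \<Rightarrow> int" where
  "augmentation w = (\<Sum>q\<in>UNIV. w q)"

lemma augmentation_R3: "augmentation w = w A0 + w A1 + w A2"
  by (simp add: augmentation_def UNIV_R3)

lemma augmentation_qmult: "augmentation (qmult u v) = augmentation u * augmentation v"
proof -
  have "augmentation (qmult u v) =
      (\<Sum>k\<in>UNIV. \<Sum>r\<in>{r \<in> UNIV. case_prod r3_op r = k}. u (fst r) * v (snd r))"
    by (simp add: augmentation_def qmult_def split_def)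
  also have "\<dots> = (\<Sum>r\<in>UNIV. u (fst r) * v (snd r))"
    by (rule sum.group) auto
  also have "\<dots> = augmentation u * augmentation v"
    by (simp add: augmentation_def sum_product sum.cartesian_product split_def
        UNIV_Times_UNIV [symmetric] del: UNIV_Times_UNIV)
  finally show ?thesis .
qed

lemma augmentation_idempotent:
  assumes "qmult w w = w"
  shows "augmentation w = 0 \<or> augmentation w = 1"
proof -
  have "augmentation w * augmentation w = augmentation w"
    using augmentation_qmult [of w w] assms by simp
  then show ?thesis
    by (metis mult_cancel_right2 mult_eq_0_iff)
qed

lemma r3_op_fibers:
  "{(x, y). r3_op x y = A0} = {(A0, A0), (A1, A2), (A2, A1)}"
  "{(x, y). r3_op x y = A1} = {(A1, A1), (A0, A2), (A2, A0)}"
  "{(x, y). r3_op x y = A2} = {(A2, A2), (A0, A1), (A1, A0)}"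
  by (auto, (case_tac a; case_tac b; simp)+)

lemma qmult_self_apply:
  "qmult w w A0 = w A0 * w A0 + 2 * w A1 * w A2"
  "qmult w w A1 = w A1 * w A1 + 2 * w A0 * w A2"
  "qmult w w A2 = w A2 * w A2 + 2 * w A0 * w A1"
  by (simp_all add: qmult_def r3_op_fibers)

lemma idempotent_coord_diff:
  fixes x y z :: int
  assumes "x * x + 2 * y * z = x" and "y * y + 2 * x * z = y"
  shows "(x - y) * (x + y - 2 * z - 1) = 0"
proof -
  have "(x - y) * (x + y - 2 * z - 1) = (x * x + 2 * y * z - x) - (y * y + 2 * x * z - y)"
    by (simp add: algebra_simps)
  with assms show ?thesis by simp
qed

lemma idempotent_coords_sum_zero:
  fixes x y z :: int
  assumes e0: "x * x + 2 * y * z = x" and e1: "y * y + 2 * x * z = y"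
    and e2: "z * z + 2 * x * y = z" and sum: "x + y + z = 0"
  shows "x = 0 \<and> y = 0 \<and> z = 0"
proof -
  have "(x - y) * (x + y - 2 * z - 1) = 0"
    by (rule idempotent_coord_diff [OF e0 e1])
  moreover have "(y - z) * (y + z - 2 * x - 1) = 0"
    by (rule idempotent_coord_diff) (use e1 e2 in \<open>simp_all add: algebra_simps\<close>)
  moreover have "x + y - 2 * z - 1 \<noteq> 0" and "y + z - 2 * x - 1 \<noteq> 0"
    using sum by presburger+
  ultimately have "x = y" and "y = z"
    by simp_all
  with sum show ?thesis
    by simp
qed

lemma idempotent_coords_sum_one:
  fixes x y z :: int
  assumes e0: "x * x + 2 * y * z = x" and e1: "y * y + 2 * x * z = y"
    and e2: "z * z + 2 * x * y = z" and sum: "x + y + z = 1"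
  shows "(x = 1 \<and> y = 0 \<and> z = 0) \<or> (x = 0 \<and> y = 1 \<and> z = 0) \<or> (x = 0 \<and> y = 0 \<and> z = 1)"
proof -
  have "(x - y) * (x + y - 2 * z - 1) = 0"
    by (rule idempotent_coord_diff [OF e0 e1])
  moreover have "(y - z) * (y + z - 2 * x - 1) = 0"
    by (rule idempotent_coord_diff) (use e1 e2 in \<open>simp_all add: algebra_simps\<close>)
  moreover have "(x - z) * (x + z - 2 * y - 1) = 0"
    by (rule idempotent_coord_diff) (use e0 e2 in \<open>simp_all add: algebra_simps\<close>)
  moreover have "x + y - 2 * z - 1 = - 3 * z" and "y + z - 2 * x - 1 = - 3 * x"
    and "x + z - 2 * y - 1 = - 3 * y"
    using sum by simp_all
  ultimately have "x = y \<or> z = 0" and "y = z \<or> x = 0" and "x = z \<or> y = 0"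
    by simp_all
  moreover have "\<not> (x = y \<and> y = z)"
    using sum by presburger
  ultimately have "(x = 0 \<and> y = 0) \<or> (y = 0 \<and> z = 0) \<or> (x = 0 \<and> z = 0)"
    by auto
  with sum show ?thesis
    by auto
qed

lemma qmult_idempotent_cases:
  assumes idem: "qmult w w = w"
  shows "w = (\<lambda>_. 0) \<or> w = basis A0 \<or> w = basis A1 \<or> w = basis A2"
proof -
  have e0: "w A0 * w A0 + 2 * w A1 * w A2 = w A0"
    and e1: "w A1 * w A1 + 2 * w A0 * w A2 = w A1"
    and e2: "w A2 * w A2 + 2 * w A0 * w A1 = w A2"
    using qmult_self_apply [of w] by (simp_all add: idem)
  have "w A0 + w A1 + w A2 = 0 \<or> w A0 + w A1 + w A2 = 1"
    using augmentation_idempotent [OF idem] by (simp add: augmentation_R3)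
  then show ?thesis
    using idempotent_coords_sum_zero [OF e0 e1 e2] idempotent_coords_sum_one [OF e0 e1 e2]
    by (auto simp: zr3_eq_iff basis_def)
qed

lemma basis_nonzero: "basis q \<noteq> (\<lambda>_. 0)"
  by (metis basis_def one_neq_zero)

theorem proposition4p3:
  shows "nonzero_idempotents = {basis A0, basis A1, basis A2}"
  using qmult_idempotent_cases basis_idempotent basis_nonzero
  unfolding nonzero_idempotents_def by auto

end
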